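(* Let $\triangle=\{a,b,c\}\subset\mathbb{R}^2$ be three non-collinear points. The three lines each passing through two of the midpoints of the sides of $\mathrm{conv}(\triangle)$ divide the plane into $7$ open connected regions. Then $\mathcal{M}_\triangle$ equals the union of the closures of those of these $7$ regions whose closures contain none of the points $a,b,c$.
   Context: A set $S\subset\mathbb{R}^2$ is in convex position if every point of $S$ lies on the boundary of $\mathrm{conv}(S)$. For a point set $X\subset\mathbb{R}^2$ and a point $O$, $X_O=2O-X$ is the reflection of $X$ in $O$. The point $O$ is an admissible center for $X$ if $X\cup X_O$ is in convex position; $\mathcal{M}_X$ denotes the set of all admissible centers for $X$. *)

theory Defs
  imports "HOL-Analysis.Analysis"
begin

definition convex_position :: "(real^2) set \<Rightarrow> bool" where
  "convex_position S \<longleftrightarrow> S \<subseteq> frontier (convex hull S)"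

definition reflect_set :: "real^2 \<Rightarrow> (real^2) set \<Rightarrow> (real^2) set" where
  "reflect_set O' X = (\<lambda>x. 2 *\<^sub>R O' - x) ` X"

definition admissible_centers :: "(real^2) set \<Rightarrow> (real^2) set" where
  "admissible_centers X = {O'. convex_position (X \<union> reflect_set O' X)}"

definition line_through :: "real^2 \<Rightarrow> real^2 \<Rightarrow> (real^2) set" where
  "line_through p q = affine hull {p, q}"

definition midlines :: "real^2 \<Rightarrow> real^2 \<Rightarrow> real^2 \<Rightarrow> (real^2) set" where
  "midlines a b c =
     (let ma = midpoint b c; mb = midpoint a c; mc = midpoint a b in
      line_through mb mc \<union> line_through mc ma \<union> line_through ma mb)"

end

theory Submission
  imports Defs
begin

text \<open>
  In barycentric coordinates \<open>(\<alpha>, \<beta>, \<gamma>)\<close> with respect to \<open>a, b, c\<close> the three midlines are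
  \<open>\<alpha> = 1/2\<close>, \<open>\<beta> = 1/2\<close> and \<open>\<gamma> = 1/2\<close>, so the regions are the cells given by the
  sides of 1/2 on which the coordinates lie: all patterns except "all three above", seven in all.
  The closed cells containing a vertex are the three corner cells, e.g. \<open>\<alpha> \<ge> 1/2, \<beta>, \<gamma> \<le> 1/2\<close>
  around \<open>a\<close>.

  For a centre \<open>O\<close> with coordinates \<open>(\<alpha>, \<beta>, \<gamma>)\<close>: if \<open>\<alpha> > 1/2\<close> and \<open>\<beta>, \<gamma> < 1/2\<close>, then \<open>a\<close> lies
  strictly inside the triangle spanned by \<open>b\<close>, \<open>c\<close> and a suitable point between the
  reflections of \<open>b\<close> and \<open>c\<close>. Otherwise some functional \<open>x \<beta> + y \<gamma>\<close> with \<open>x, y \<ge> 0\<close>, which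
  vanishes at \<open>a\<close>, is nonnegative at all six points, so it supports the hull at \<open>a\<close> and, by
  point symmetry, at the reflection of \<open>a\<close>. Hence the admissible centres are exactly the points
  outside the three open corner cells, i.e. the union of the four remaining closed cells.
\<close>

section \<open>Barycentric coordinates\<close>

definition cross2 :: "real^2 \<Rightarrow> real^2 \<Rightarrow> real" where
  "cross2 u v = u$1 * v$2 - u$2 * v$1"

lemma collinear_if_cross2_eq_0:
  assumes "cross2 u v = 0"
  shows "collinear {0, u, v}"
proof -
  have "\<exists>k. v = k *\<^sub>R u" if "u \<noteq> 0"
  proof (cases "u$1 = 0")
    case True
    then have "u$2 \<noteq> 0" using that by (simp add: vec_eq_iff forall_2)
    then show ?thesis using True assms
      by (intro exI[of _ "v$2 / u$2"]) (simp add: vec_eq_iff forall_2 cross2_def field_simps)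
  next
    case False
    then show ?thesis using assms
      by (intro exI[of _ "v$1 / u$1"]) (simp add: vec_eq_iff forall_2 cross2_def field_simps)
  qed
  then show ?thesis unfolding collinear_lemma by blast
qed

lemma cross2_neq_0_if_not_collinear:
  assumes "\<not> collinear {a, b, c}"
  shows "cross2 (b - a) (c - a) \<noteq> 0"
proof
  assume "cross2 (b - a) (c - a) = 0"
  then have "collinear {b, a, c}"
    using collinear_3[of b a c] collinear_if_cross2_eq_0 by simp
  with assms show False by (simp add: insert_commute)
qed

lemma cross2_linear_left: "cross2 (x *\<^sub>R u + y *\<^sub>R v) w = x * cross2 u w + y * cross2 v w"
  by (simp add: cross2_def algebra_simps)

lemma cross2_linear_right: "cross2 w (x *\<^sub>R u + y *\<^sub>R v) = x * cross2 w u + y * cross2 w v"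
  by (simp add: cross2_def algebra_simps)

lemma cramer2:
  assumes "cross2 u v \<noteq> 0"
  shows "w = (cross2 w v / cross2 u v) *\<^sub>R u + (cross2 u w / cross2 u v) *\<^sub>R v"
proof -
  have "cross2 u v *\<^sub>R w = cross2 w v *\<^sub>R u + cross2 u w *\<^sub>R v"
    by (simp add: vec_eq_iff forall_2 cross2_def algebra_simps)
  then have "w = inverse (cross2 u v) *\<^sub>R (cross2 w v *\<^sub>R u + cross2 u w *\<^sub>R v)"
    using assms by (metis scaleR_scaleR left_inverse scaleR_one)
  then show ?thesis by (simp add: scaleR_add_right divide_inverse mult.commute)
qed

definition bary_b :: "real^2 \<Rightarrow> real^2 \<Rightarrow> real^2 \<Rightarrow> real^2 \<Rightarrow> real" where
  "bary_b a b c p = cross2 (p - a) (c - a) / cross2 (b - a) (c - a)"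

definition bary_c :: "real^2 \<Rightarrow> real^2 \<Rightarrow> real^2 \<Rightarrow> real^2 \<Rightarrow> real" where
  "bary_c a b c p = cross2 (b - a) (p - a) / cross2 (b - a) (c - a)"

definition bary_a :: "real^2 \<Rightarrow> real^2 \<Rightarrow> real^2 \<Rightarrow> real^2 \<Rightarrow> real" where
  "bary_a a b c p = 1 - bary_b a b c p - bary_c a b c p"

lemma bary_sum: "bary_a a b c p + bary_b a b c p + bary_c a b c p = 1"
  by (simp add: bary_a_def)

lemma isCont_bary:
  "isCont (bary_a a b c) p" "isCont (bary_b a b c) p" "isCont (bary_c a b c) p"
  unfolding bary_a_def[abs_def] bary_b_def[abs_def] bary_c_def[abs_def] cross2_def divide_inverse
  by (auto intro!: continuous_intros)

context
  fixes a b c :: "real^2"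
  assumes not_collinear: "\<not> collinear {a, b, c}"
begin

lemma bary_decomp: "p = bary_a a b c p *\<^sub>R a + bary_b a b c p *\<^sub>R b + bary_c a b c p *\<^sub>R c"
proof -
  have "p - a = bary_b a b c p *\<^sub>R (b - a) + bary_c a b c p *\<^sub>R (c - a)"
    unfolding bary_b_def bary_c_def
    by (rule cramer2[OF cross2_neq_0_if_not_collinear[OF not_collinear]])
  then show ?thesis by (simp add: bary_a_def algebra_simps)
qed

lemma bary_unique:
  assumes "x + y + z = 1" "p = x *\<^sub>R a + y *\<^sub>R b + z *\<^sub>R c"
  shows "bary_a a b c p = x" "bary_b a b c p = y" "bary_c a b c p = z"
proof -
  have x: "x = 1 - y - z" using assms(1) by simp
  have "p - a = y *\<^sub>R (b - a) + z *\<^sub>R (c - a)"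
    using assms(2) unfolding x by (simp add: algebra_simps)
  then show "bary_b a b c p = y" "bary_c a b c p = z"
    using cross2_neq_0_if_not_collinear[OF not_collinear]
    by (simp_all add: bary_b_def bary_c_def cross2_linear_left cross2_linear_right)
       (simp_all add: cross2_def field_simps)
  then show "bary_a a b c p = x" using assms(1) by (simp add: bary_a_def)
qed

lemma bary_vertices [simp]:
  "bary_a a b c a = 1" "bary_b a b c a = 0" "bary_c a b c a = 0"
  "bary_a a b c b = 0" "bary_b a b c b = 1" "bary_c a b c b = 0"
  "bary_a a b c c = 0" "bary_b a b c c = 0" "bary_c a b c c = 1"
  using bary_unique[of 1 0 0 a] bary_unique[of 0 1 0 b] bary_unique[of 0 0 1 c] by simp_all

lemma bary_affine:
  "bary_a a b c ((1 - u) *\<^sub>R p + u *\<^sub>R q) = (1 - u) * bary_a a b c p + u * bary_a a b c q"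
  "bary_b a b c ((1 - u) *\<^sub>R p + u *\<^sub>R q) = (1 - u) * bary_b a b c p + u * bary_b a b c q"
  "bary_c a b c ((1 - u) *\<^sub>R p + u *\<^sub>R q) = (1 - u) * bary_c a b c p + u * bary_c a b c q"
proof -
  have decomp: "(1 - u) *\<^sub>R p + u *\<^sub>R q
      = ((1 - u) * bary_a a b c p + u * bary_a a b c q) *\<^sub>R a
      + ((1 - u) * bary_b a b c p + u * bary_b a b c q) *\<^sub>R b
      + ((1 - u) * bary_c a b c p + u * bary_c a b c q) *\<^sub>R c"
  proof -
    have "(1 - u) *\<^sub>R p + u *\<^sub>R q
        = (1 - u) *\<^sub>R (bary_a a b c p *\<^sub>R a + bary_b a b c p *\<^sub>R b + bary_c a b c p *\<^sub>R c)
        + u *\<^sub>R (bary_a a b c q *\<^sub>R a + bary_b a b c q *\<^sub>R b + bary_c a b c q *\<^sub>R c)"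
      by (simp only: bary_decomp[symmetric])
    then show ?thesis by (simp add: algebra_simps)
  qed
  have sum: "((1 - u) * bary_a a b c p + u * bary_a a b c q)
      + ((1 - u) * bary_b a b c p + u * bary_b a b c q)
      + ((1 - u) * bary_c a b c p + u * bary_c a b c q) = 1"
    by (simp add: bary_a_def algebra_simps)
  show
    "bary_a a b c ((1 - u) *\<^sub>R p + u *\<^sub>R q) = (1 - u) * bary_a a b c p + u * bary_a a b c q"
    "bary_b a b c ((1 - u) *\<^sub>R p + u *\<^sub>R q) = (1 - u) * bary_b a b c p + u * bary_b a b c q"
    "bary_c a b c ((1 - u) *\<^sub>R p + u *\<^sub>R q) = (1 - u) * bary_c a b c p + u * bary_c a b c q"
    using bary_unique[OF sum decomp] by simp_all
qed

end

lemma bary_rotate: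
  assumes "\<not> collinear {a, b, c}"
  shows "bary_a b c a p = bary_b a b c p" "bary_b b c a p = bary_c a b c p"
    "bary_c b c a p = bary_a a b c p"
proof -
  have "\<not> collinear {b, c, a}" using assms by (simp add: insert_commute)
  moreover have "bary_b a b c p + bary_c a b c p + bary_a a b c p = 1"
    using bary_sum[of a b c p] by simp
  moreover have "p = bary_b a b c p *\<^sub>R b + bary_c a b c p *\<^sub>R c + bary_a a b c p *\<^sub>R a"
    using bary_decomp[OF assms, of p] by (simp add: algebra_simps)
  ultimately show "bary_a b c a p = bary_b a b c p" "bary_b b c a p = bary_c a b c p"
    "bary_c b c a p = bary_a a b c p"
    by (simp_all add: bary_unique)
qed

section \<open>The cells cut out by the midlines\<close>

lemma line_through_midpoints:
  assumes "\<not> collinear {a, b, c}"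
  shows "line_through (midpoint a c) (midpoint a b) = {p. bary_a a b c p = 1/2}"
proof (intro equalityI subsetI)
  fix p assume "p \<in> line_through (midpoint a c) (midpoint a b)"
  then obtain u v where "u + v = 1" "p = u *\<^sub>R midpoint a c + v *\<^sub>R midpoint a b"
    by (auto simp: line_through_def affine_hull_2)
  then have "1/2 + v/2 + u/2 = 1" "p = (1/2) *\<^sub>R a + (v/2) *\<^sub>R b + (u/2) *\<^sub>R c"
    by (auto simp: midpoint_def algebra_simps simp flip: scaleR_add_left add_divide_distrib)
  then show "p \<in> {p. bary_a a b c p = 1/2}" using bary_unique[OF assms] by simp
next
  fix p assume "p \<in> {p. bary_a a b c p = 1/2}"
  then have "bary_b a b c p + bary_c a b c p = 1/2"
    and "bary_a a b c p = bary_b a b c p + bary_c a b c p"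
    using bary_sum[of a b c p] by simp_all
  then have "p = (bary_b a b c p + bary_c a b c p) *\<^sub>R a + bary_b a b c p *\<^sub>R b + bary_c a b c p *\<^sub>R c"
    using bary_decomp[OF assms, of p] by simp
  then have "p = (2 * bary_c a b c p) *\<^sub>R midpoint a c + (2 * bary_b a b c p) *\<^sub>R midpoint a b"
    by (simp add: midpoint_def algebra_simps)
  moreover have "2 * bary_c a b c p + 2 * bary_b a b c p = 1"
    using \<open>bary_b a b c p + bary_c a b c p = 1/2\<close> by simp
  ultimately show "p \<in> line_through (midpoint a c) (midpoint a b)"
    unfolding line_through_def affine_hull_2 by blast
qed

lemma midlines_eq:
  assumes "\<not> collinear {a, b, c}"
  shows "midlines a b c = {p. bary_a a b c p = 1/2 \<or> bary_b a b c p = 1/2 \<or> bary_c a b c p = 1/2}"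
proof -
  have bca: "\<not> collinear {b, c, a}" and cab: "\<not> collinear {c, a, b}"
    using assms by (simp_all add: insert_commute)
  have "line_through (midpoint a b) (midpoint b c) = {p. bary_b a b c p = 1/2}"
    using line_through_midpoints[OF bca] by (simp add: bary_rotate[OF assms] midpoint_sym)
  moreover have "line_through (midpoint b c) (midpoint a c) = {p. bary_c a b c p = 1/2}"
    using line_through_midpoints[OF cab] by (simp add: bary_rotate[OF bca] bary_rotate[OF assms] midpoint_sym)
  ultimately show ?thesis
    using line_through_midpoints[OF assms] by (auto simp: midlines_def Let_def)
qed

definition half_line :: "bool \<Rightarrow> real set" where
  "half_line s = (if s then {1/2<..} else {..<1/2})"

definition closed_half_line :: "bool \<Rightarrow> real set" where
  "closed_half_line s = (if s then {1/2..} else {..1/2})"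

lemma mem_half_line_iff: "x \<in> half_line s \<longleftrightarrow> x \<noteq> 1/2 \<and> s = (1/2 < x)"
  by (auto simp: half_line_def)

lemma half_line_subset_closed: "half_line s \<subseteq> closed_half_line s"
  by (auto simp: half_line_def closed_half_line_def)

lemma convex_half_line: "convex (half_line s)"
  by (simp add: half_line_def)

lemma segment_into_half_line:
  assumes "x \<in> closed_half_line s" "y \<in> half_line s" "0 < t" "t \<le> 1"
  shows "(1 - t) * x + t * y \<in> half_line s"
proof -
  have "(1 - t) * x + t * y - 1/2 = (1 - t) * (x - 1/2) + t * (y - 1/2)"
    by (simp add: field_simps)
  moreover have "0 \<le> (1 - t) * (x - 1/2) \<and> 0 < t * (y - 1/2)" if "s"
    using assms that by (simp add: half_line_def closed_half_line_def)
  moreover have "(1 - t) * (x - 1/2) \<le> 0 \<and> t * (y - 1/2) < 0" if "\<not> s"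
    using assms that by (simp add: half_line_def closed_half_line_def mult_nonneg_nonpos mult_pos_neg)
  ultimately show ?thesis by (cases s) (auto simp: half_line_def)
qed

lemma half_line_witness:
  assumes "\<not> (s1 \<and> s2 \<and> s3)"
  shows "\<exists>x y z. x + y + z = 1 \<and> x \<in> half_line s1 \<and> y \<in> half_line s2 \<and> z \<in> half_line s3"
proof -
  \<comment> \<open>coordinates marked True are 1; the other 3 - k share the remaining 1 - k equally\<close>
  define k :: real where "k = of_bool s1 + of_bool s2 + of_bool s3"
  define w where "w s = (if s then 1 else (1 - k) / (3 - k))" for s
  show ?thesis
    using assms
    by (intro exI[of _ "w s1"] exI[of _ "w s2"] exI[of _ "w s3"])
      (cases s1; cases s2; cases s3; simp add: w_def k_def half_line_def)
qed

text \<open>A sign pattern records which barycentric coordinates exceed 1/2; all three cannot,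
  since they sum to 1.\<close>

type_synonym sign_pattern = "bool \<times> bool \<times> bool"

fun midline_cell :: "real^2 \<Rightarrow> real^2 \<Rightarrow> real^2 \<Rightarrow> sign_pattern \<Rightarrow> (real^2) set" where
  "midline_cell a b c (s1, s2, s3) =
     bary_a a b c -` half_line s1 \<inter> bary_b a b c -` half_line s2 \<inter> bary_c a b c -` half_line s3"

fun closed_midline_cell :: "real^2 \<Rightarrow> real^2 \<Rightarrow> real^2 \<Rightarrow> sign_pattern \<Rightarrow> (real^2) set" where
  "closed_midline_cell a b c (s1, s2, s3) = bary_a a b c -` closed_half_line s1
     \<inter> bary_b a b c -` closed_half_line s2 \<inter> bary_c a b c -` closed_half_line s3"

definition cell_patterns :: "sign_pattern set" where
  "cell_patterns = - {(True, True, True)}"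

definition corner_patterns :: "sign_pattern set" where
  "corner_patterns = {(True, False, False), (False, True, False), (False, False, True)}"

lemma card_cell_patterns: "card cell_patterns = 7"
  by (simp add: cell_patterns_def Compl_eq_Diff_UNIV card_Diff_singleton card_UNIV_bool)

lemma open_midline_cell: "open (midline_cell a b c s)"
proof -
  have "open (half_line s')" for s' by (simp add: half_line_def)
  then show ?thesis
    by (cases s) (simp only: midline_cell.simps, intro open_Int continuous_open_vimage isCont_bary)
qed

lemma closed_closed_midline_cell: "closed (closed_midline_cell a b c s)"
proof -
  have "closed (closed_half_line s')" for s' by (simp add: closed_half_line_def)
  then show ?thesis
    by (cases s) (simp only: closed_midline_cell.simps, intro closed_Int continuous_closed_vimage isCont_bary)
qed

context
  fixes a b c :: "real^2"
  assumes not_collinear: "\<not> collinear {a, b, c}"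
begin

lemma convex_midline_cell: "convex (midline_cell a b c s)"
proof (cases s)
  case (fields s1 s2 s3)
  show ?thesis
    unfolding fields convex_alt
    using convexD_alt[OF convex_half_line] by (auto simp: bary_affine[OF not_collinear])
qed

lemma mem_midline_cell_iff:
  "p \<in> midline_cell a b c s \<longleftrightarrow>
     p \<notin> midlines a b c \<and> s = (1/2 < bary_a a b c p, 1/2 < bary_b a b c p, 1/2 < bary_c a b c p)"
  by (cases s) (auto simp: midlines_eq[OF not_collinear] mem_half_line_iff)

lemma Union_midline_cells: "\<Union> (midline_cell a b c ` cell_patterns) = - midlines a b c"
proof -
  have "(1/2 < bary_a a b c p, 1/2 < bary_b a b c p, 1/2 < bary_c a b c p) \<in> cell_patterns" for p
    using bary_sum[of a b c p] by (auto simp: cell_patterns_def)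
  then show ?thesis by (auto simp del: midline_cell.simps simp: mem_midline_cell_iff)
qed

lemma midline_cell_nonempty:
  assumes "s \<in> cell_patterns"
  shows "midline_cell a b c s \<noteq> {}"
proof (cases s)
  case (fields s1 s2 s3)
  then have "\<not> (s1 \<and> s2 \<and> s3)" using assms by (simp add: cell_patterns_def)
  then obtain x y z where "x + y + z = 1"
    and "x \<in> half_line s1" "y \<in> half_line s2" "z \<in> half_line s3"
    using half_line_witness by blast
  then have "x *\<^sub>R a + y *\<^sub>R b + z *\<^sub>R c \<in> midline_cell a b c s"
    by (simp add: fields bary_unique[OF not_collinear])
  then show ?thesis by blast
qed

lemma closure_midline_cell:
  assumes "s \<in> cell_patterns"
  shows "closure (midline_cell a b c s) = closed_midline_cell a b c s"
proof
  have "midline_cell a b c s \<subseteq> closed_midline_cell a b c s"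
    using half_line_subset_closed by (cases s) auto
  then show "closure (midline_cell a b c s) \<subseteq> closed_midline_cell a b c s"
    by (intro closure_minimal closed_closed_midline_cell)
  obtain q where q: "q \<in> midline_cell a b c s"
    using midline_cell_nonempty[OF assms] by blast
  show "closed_midline_cell a b c s \<subseteq> closure (midline_cell a b c s)"
  proof
    fix p assume p: "p \<in> closed_midline_cell a b c s"
    show "p \<in> closure (midline_cell a b c s)"
    proof (cases "p = q")
      case True
      then show ?thesis using q closure_subset by blast
    next
      case False
      have "open_segment p q \<subseteq> midline_cell a b c s"
      proof
        fix r assume "r \<in> open_segment p q"
        then obtain t where "0 < t" "t < 1" "r = (1 - t) *\<^sub>R p + t *\<^sub>R q"
          by (auto simp: in_segment)
        then show "r \<in> midline_cell a b c s"
          using p q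
          by (cases s) (auto simp: bary_affine[OF not_collinear] intro!: segment_into_half_line)
      qed
      then have "closure (open_segment p q) \<subseteq> closure (midline_cell a b c s)"
        by (rule closure_mono)
      then show ?thesis
        using False ends_in_segment(1)[of p q] by auto
    qed
  qed
qed

lemma components_complement_midlines:
  "components (- midlines a b c) = midline_cell a b c ` cell_patterns"
proof (rule components_open_unique)
  show "pairwise disjnt (midline_cell a b c ` cell_patterns)"
    by (auto simp del: midline_cell.simps simp: pairwise_def disjnt_def mem_midline_cell_iff)
  show "\<Union> (midline_cell a b c ` cell_patterns) = - midlines a b c"
    by (rule Union_midline_cells)
  show "open C \<and> connected C \<and> C \<noteq> {}" if "C \<in> midline_cell a b c ` cell_patterns" for C
    using that open_midline_cell convex_connected[OF convex_midline_cell] midline_cell_nonempty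
    by blast
qed

lemma card_components_complement_midlines: "card (components (- midlines a b c)) = 7"
proof -
  have "inj_on (midline_cell a b c) cell_patterns"
  proof (rule inj_onI)
    fix s s' assume "s \<in> cell_patterns" "midline_cell a b c s = midline_cell a b c s'"
    then obtain p where "p \<in> midline_cell a b c s" "p \<in> midline_cell a b c s'"
      using midline_cell_nonempty by blast
    then show "s = s'" by (simp del: midline_cell.simps add: mem_midline_cell_iff)
  qed
  then show ?thesis
    by (simp add: components_complement_midlines card_image card_cell_patterns)
qed

lemma closed_midline_cell_avoids_vertices_iff:
  "a \<notin> closed_midline_cell a b c s \<and> b \<notin> closed_midline_cell a b c s
     \<and> c \<notin> closed_midline_cell a b c s \<longleftrightarrow> s \<notin> corner_patterns"
  by (cases s) (auto simp: closed_half_line_def bary_vertices[OF not_collinear] corner_patterns_def)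

lemma closures_of_components_complement_midlines:
  "{closure C | C. C \<in> components (- midlines a b c) \<and> P (closure C)}
     = closed_midline_cell a b c ` {s \<in> cell_patterns. P (closed_midline_cell a b c s)}"
proof (intro equalityI subsetI)
  fix X assume "X \<in> {closure C | C. C \<in> components (- midlines a b c) \<and> P (closure C)}"
  then obtain s where "s \<in> cell_patterns" "X = closure (midline_cell a b c s)" "P X"
    unfolding components_complement_midlines by blast
  moreover from this have "X = closed_midline_cell a b c s"
    using closure_midline_cell by simp
  ultimately show "X \<in> closed_midline_cell a b c ` {s \<in> cell_patterns. P (closed_midline_cell a b c s)}"
    by (intro image_eqI[of X _ s]) simp_all
next
  fix X assume "X \<in> closed_midline_cell a b c ` {s \<in> cell_patterns. P (closed_midline_cell a b c s)}"
  then obtain s where "s \<in> cell_patterns" "P X" "X = closure (midline_cell a b c s)"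
    using closure_midline_cell by auto
  then show "X \<in> {closure C | C. C \<in> components (- midlines a b c) \<and> P (closure C)}"
    unfolding components_complement_midlines by blast
qed

end

lemma Union_closed_midline_cells_off_corners:
  "\<Union> (closed_midline_cell a b c ` (cell_patterns - corner_patterns))
    = - \<Union> (midline_cell a b c ` corner_patterns)"
proof -
  have off_corners: "cell_patterns - corner_patterns
      = {(False, False, False), (False, True, True), (True, False, True), (True, True, False)}"
    by (auto simp: cell_patterns_def corner_patterns_def)
  show ?thesis
  proof (rule set_eqI)
    fix p
    show "p \<in> \<Union> (closed_midline_cell a b c ` (cell_patterns - corner_patterns))
      \<longleftrightarrow> p \<in> - \<Union> (midline_cell a b c ` corner_patterns)"
      unfolding off_corners unfolding corner_patterns_def using bary_sum[of a b c p]
      by (simp add: half_line_def closed_half_line_def) linarith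
  qed
qed

section \<open>Convex position of a triangle and its point reflection\<close>

lemma maximizer_in_frontier_convex_hull:
  fixes f :: "'a::real_normed_vector \<Rightarrow> real"
  assumes affine: "\<And>x y u. f ((1 - u) *\<^sub>R x + u *\<^sub>R y) = (1 - u) * f x + u * f y"
    and "p \<in> S" and max: "\<And>q. q \<in> S \<Longrightarrow> f q \<le> f p" and "f z \<noteq> f p"
  shows "p \<in> frontier (convex hull S)"
proof -
  have "convex {q. f q \<le> f p}"
    unfolding convex_alt using affine by (auto intro: convex_bound_le)
  then have hull_le: "convex hull S \<subseteq> {q. f q \<le> f p}"
    using max by (intro hull_minimal) auto
  obtain w where w: "f p < f w"
  proof (cases "f p < f z")
    case True
    then show ?thesis by (rule that)
  next
    case False
    have "f ((1 - 2) *\<^sub>R z + 2 *\<^sub>R p) = (1 - 2) * f z + 2 * f p" by (rule affine)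
    with False \<open>f z \<noteq> f p\<close> show ?thesis
      by (intro that[of "(1 - 2) *\<^sub>R z + 2 *\<^sub>R p"]) auto
  qed
  have "p \<notin> interior (convex hull S)"
  proof
    assume "p \<in> interior (convex hull S)"
    moreover have "((\<lambda>t. (1 - t) *\<^sub>R p + t *\<^sub>R w) \<longlongrightarrow> p) (at_right 0)"
      by (auto intro!: tendsto_eq_intros)
    ultimately have "\<forall>\<^sub>F t in at_right 0. (1 - t) *\<^sub>R p + t *\<^sub>R w \<in> interior (convex hull S)"
      by (intro topological_tendstoD) auto
    then have "\<forall>\<^sub>F t in at_right 0. 0 < t \<and> (1 - t) *\<^sub>R p + t *\<^sub>R w \<in> interior (convex hull S)"
      by (intro eventually_conj eventually_at_right_less)
    then obtain t where t: "0 < t" "(1 - t) *\<^sub>R p + t *\<^sub>R w \<in> convex hull S"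
      using eventually_happens'[OF trivial_limit_at_right_real] interior_subset by blast
    have "f p < (1 - t) * f p + t * f w" using t(1) w by (simp add: algebra_simps)
    also have "\<dots> = f ((1 - t) *\<^sub>R p + t *\<^sub>R w)" by (rule affine[symmetric])
    finally show False using hull_le t(2) by auto
  qed
  moreover have "p \<in> closure (convex hull S)"
    using \<open>p \<in> S\<close> by (meson closure_subset hull_inc subsetD)
  ultimately show ?thesis by (simp add: frontier_def)
qed

text \<open>The conclusions say that \<open>x \<beta> + y \<gamma>\<close> is nonnegative at \<open>b\<close>, \<open>c\<close> and at the reflections of
  \<open>a\<close>, \<open>b\<close>, \<open>c\<close> in the point with barycentric coordinates \<open>(\<alpha>, \<beta>, \<gamma>)\<close>.\<close>

lemma support_weights:
  fixes \<alpha> \<beta> \<gamma> :: real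
  assumes "\<alpha> + \<beta> + \<gamma> = 1" "\<not> (1/2 < \<alpha> \<and> \<beta> < 1/2 \<and> \<gamma> < 1/2)"
  obtains x y where "0 \<le> x" "0 \<le> y" "0 < x + y" "0 \<le> \<beta> * x + \<gamma> * y"
    "x \<le> 2 * (\<beta> * x + \<gamma> * y)" "y \<le> 2 * (\<beta> * x + \<gamma> * y)"
proof -
  consider "1/2 \<le> \<beta>" | "1/2 \<le> \<gamma>" | "\<alpha> \<le> 1/2" "\<beta> < 1/2" "\<gamma> < 1/2"
    using assms by linarith
  then show ?thesis
  proof cases
    case 1
    then show ?thesis by (intro that[of 1 0]) auto
  next
    case 2
    then show ?thesis by (intro that[of 0 1]) auto
  next
    case 3
    have "\<beta> * (2 * \<gamma>) + \<gamma> * (1 - 2 * \<beta>) = \<gamma>" by (simp add: algebra_simps)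
    with 3 assms(1) show ?thesis by (intro that[of "2 * \<gamma>" "1 - 2 * \<beta>"]) auto
  qed
qed

lemma vertex_on_frontier:
  assumes not_collinear: "\<not> collinear {a, b, c}"
    and O': "O' = \<alpha> *\<^sub>R a + \<beta> *\<^sub>R b + \<gamma> *\<^sub>R c" and sum: "\<alpha> + \<beta> + \<gamma> = 1"
    and not_corner: "\<not> (1/2 < \<alpha> \<and> \<beta> < 1/2 \<and> \<gamma> < 1/2)"
  defines "S \<equiv> {a, b, c} \<union> reflect_set O' {a, b, c}"
  shows "a \<in> frontier (convex hull S)" "2 *\<^sub>R O' - a \<in> frontier (convex hull S)"
proof -
  obtain x y where xy: "0 \<le> x" "0 \<le> y" "0 < x + y" "0 \<le> \<beta> * x + \<gamma> * y"
    "x \<le> 2 * (\<beta> * x + \<gamma> * y)" "y \<le> 2 * (\<beta> * x + \<gamma> * y)"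
    using support_weights[OF sum not_corner] by blast
  define f where "f q = x * bary_b a b c q + y * bary_c a b c q" for q
  have f_affine: "f ((1 - u) *\<^sub>R p + u *\<^sub>R q) = (1 - u) * f p + u * f q" for u p q
    unfolding f_def bary_affine[OF not_collinear] by (simp add: algebra_simps)
  have f_reflect: "f (2 *\<^sub>R O' - q) = 2 * f O' - f q" for q
    using f_affine[of 2 q O'] by simp
  have f_O: "f O' = \<beta> * x + \<gamma> * y"
    using bary_unique[OF not_collinear sum O'] by (simp add: f_def mult.commute)
  have f_vertices: "f a = 0" "f b = x" "f c = y"
    by (simp_all add: f_def bary_vertices[OF not_collinear])
  have S_reflect: "2 *\<^sub>R O' - q \<in> S" if "q \<in> S" for q
    using that by (auto simp: S_def reflect_set_def)
  have f_nonneg: "0 \<le> f q" if "q \<in> S" for q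
    using that xy by (auto simp: S_def reflect_set_def f_reflect f_O f_vertices)
  have "bary_b a b c (3 *\<^sub>R a - b - c) = -1" "bary_c a b c (3 *\<^sub>R a - b - c) = -1"
    using bary_unique[OF not_collinear, of 3 "-1" "-1" "3 *\<^sub>R a - b - c"] by simp_all
  then have "f (3 *\<^sub>R a - b - c) = - (x + y)" by (simp add: f_def)
  then have f_escape: "f (3 *\<^sub>R a - b - c) < 0" using xy by simp
  have in_S: "a \<in> S" "2 *\<^sub>R O' - a \<in> S" by (simp_all add: S_def reflect_set_def)
  show "a \<in> frontier (convex hull S)"
  proof (rule maximizer_in_frontier_convex_hull[where f = "\<lambda>q. - f q"])
    show "- f ((1 - u) *\<^sub>R p + u *\<^sub>R q) = (1 - u) * - f p + u * - f q" for u p q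
      unfolding f_affine by (simp add: algebra_simps)
    show "- f q \<le> - f a" if "q \<in> S" for q
      using f_nonneg[OF that] by (simp add: f_vertices)
    show "- f (3 *\<^sub>R a - b - c) \<noteq> - f a"
      using f_escape by (simp add: f_vertices)
  qed (rule in_S)
  show "2 *\<^sub>R O' - a \<in> frontier (convex hull S)"
  proof (rule maximizer_in_frontier_convex_hull[where f = f])
    show "f q \<le> f (2 *\<^sub>R O' - a)" if "q \<in> S" for q
      using f_nonneg[OF S_reflect[OF that]] by (simp add: f_reflect f_vertices)
    show "f (3 *\<^sub>R a - b - c) \<noteq> f (2 *\<^sub>R O' - a)"
      using f_escape f_nonneg[OF in_S(2)] by simp
  qed (use f_affine in_S in auto)
qed

lemma in_interior_convex_hull_3:
  fixes p u v w :: "real^2"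
  assumes "\<not> collinear {p, u, v}" and "0 < x" "0 < y" "0 < z"
    and "x + y + z = 1" "x *\<^sub>R u + y *\<^sub>R v + z *\<^sub>R w = p"
  shows "p \<in> interior (convex hull {u, v, w})"
proof -
  have "\<not> collinear {u, v, w}"
  proof
    assume "collinear {u, v, w}"
    then have "collinear (affine hull {u, v, w})"
      by (simp add: collinear_affine_hull_collinear)
    moreover have "p \<in> affine hull {u, v, w}"
      unfolding affine_hull_3 using assms(5,6) by blast
    then have "{p, u, v} \<subseteq> affine hull {u, v, w}"
      by (simp add: hull_inc)
    ultimately show False
      using assms(1) collinear_subset by blast
  qed
  then show ?thesis
    using assms(2-) by (auto simp: interior_convex_hull_3_minimal)
qed

lemma vertex_in_interior:
  assumes not_collinear: "\<not> collinear {a, b, c}"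
    and O': "O' = \<alpha> *\<^sub>R a + \<beta> *\<^sub>R b + \<gamma> *\<^sub>R c" and sum: "\<alpha> + \<beta> + \<gamma> = 1"
    and corner: "1/2 < \<alpha>" "\<beta> < 1/2" "\<gamma> < 1/2"
  defines "S \<equiv> {a, b, c} \<union> reflect_set O' {a, b, c}"
  shows "a \<in> interior (convex hull S)"
proof -
  define t where "t = 1/2 + max \<beta> 0 - max \<gamma> 0"
  have t: "0 \<le> t" "t \<le> 1" "2 * \<beta> < t" "2 * \<gamma> < 1 - t"
    using corner sum by (auto simp: t_def)
  \<comment> \<open>a point between the reflections of \<open>b\<close> and \<open>c\<close> such that \<open>a\<close> is a positive combination
    of \<open>b\<close>, \<open>c\<close> and \<open>Q\<close>\<close>
  define Q where "Q = t *\<^sub>R (2 *\<^sub>R O' - b) + (1 - t) *\<^sub>R (2 *\<^sub>R O' - c)"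
  have "Q \<in> convex hull S"
    unfolding Q_def
    by (rule convexD[OF convex_convex_hull]) (use t(1,2) in \<open>auto simp: S_def reflect_set_def intro: hull_inc\<close>)
  define x y z where "x = (t - 2 * \<beta>) / (2 * \<alpha>)" and "y = (1 - t - 2 * \<gamma>) / (2 * \<alpha>)"
    and "z = 1 / (2 * \<alpha>)"
  have pos: "0 < x" "0 < y" "0 < z"
    using t corner by (simp_all add: x_def y_def z_def)
  have sum_xyz: "x + y + z = 1"
  proof -
    have "x + y + z = (2 - 2 * \<beta> - 2 * \<gamma>) / (2 * \<alpha>)"
      by (simp add: x_def y_def z_def diff_divide_distrib add_divide_distrib)
    also have "2 - 2 * \<beta> - 2 * \<gamma> = 2 * \<alpha>" using sum by simp
    finally show ?thesis using corner by simp
  qed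
  have a_eq: "x *\<^sub>R b + y *\<^sub>R c + z *\<^sub>R Q = a"
  proof -
    have "(2 * \<alpha>) *\<^sub>R (x *\<^sub>R b + y *\<^sub>R c + z *\<^sub>R Q)
        = (t - 2 * \<beta>) *\<^sub>R b + (1 - t - 2 * \<gamma>) *\<^sub>R c + Q"
      using corner by (simp add: x_def y_def z_def scaleR_add_right)
    also have "\<dots> = (2 * \<alpha>) *\<^sub>R a"
      by (simp add: Q_def O' algebra_simps)
    finally show ?thesis using corner by simp
  qed
  have "a \<in> interior (convex hull {b, c, Q})"
    by (rule in_interior_convex_hull_3[OF not_collinear pos sum_xyz a_eq])
  moreover have "convex hull {b, c, Q} \<subseteq> convex hull S"
    using \<open>Q \<in> convex hull S\<close> by (intro hull_minimal) (auto simp: S_def hull_inc)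
  ultimately show ?thesis
    using interior_mono by blast
qed

lemma vertex_and_reflection_in_frontier_iff:
  assumes "\<not> collinear {a, b, c}"
    and "O' = \<alpha> *\<^sub>R a + \<beta> *\<^sub>R b + \<gamma> *\<^sub>R c" and "\<alpha> + \<beta> + \<gamma> = 1"
  shows "{a, 2 *\<^sub>R O' - a} \<subseteq> frontier (convex hull ({a, b, c} \<union> reflect_set O' {a, b, c}))
    \<longleftrightarrow> \<not> (1/2 < \<alpha> \<and> \<beta> < 1/2 \<and> \<gamma> < 1/2)"
  using vertex_on_frontier[OF assms] vertex_in_interior[OF assms]
  by (auto simp: frontier_def)

lemma admissible_centers_eq:
  assumes not_collinear: "\<not> collinear {a, b, c}"
  shows "admissible_centers {a, b, c} = - \<Union> (midline_cell a b c ` corner_patterns)"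
proof (rule set_eqI)
  fix O'
  define S where "S = {a, b, c} \<union> reflect_set O' {a, b, c}"
  define F where "F = frontier (convex hull S)"
  define \<alpha> \<beta> \<gamma> where "\<alpha> = bary_a a b c O'" and "\<beta> = bary_b a b c O'" and "\<gamma> = bary_c a b c O'"
  have decomp: "O' = \<alpha> *\<^sub>R a + \<beta> *\<^sub>R b + \<gamma> *\<^sub>R c" "O' = \<beta> *\<^sub>R b + \<gamma> *\<^sub>R c + \<alpha> *\<^sub>R a"
    "O' = \<gamma> *\<^sub>R c + \<alpha> *\<^sub>R a + \<beta> *\<^sub>R b"
    using bary_decomp[OF not_collinear, of O'] by (simp_all add: \<alpha>_def \<beta>_def \<gamma>_def algebra_simps)
  have sum: "\<alpha> + \<beta> + \<gamma> = 1" "\<beta> + \<gamma> + \<alpha> = 1" "\<gamma> + \<alpha> + \<beta> = 1"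
    using bary_sum[of a b c O'] by (simp_all add: \<alpha>_def \<beta>_def \<gamma>_def)
  have rotated: "\<not> collinear {b, c, a}" "\<not> collinear {c, a, b}"
    "S = {b, c, a} \<union> reflect_set O' {b, c, a}" "S = {c, a, b} \<union> reflect_set O' {c, a, b}"
    using not_collinear by (simp_all add: S_def insert_commute)
  have "O' \<in> admissible_centers {a, b, c} \<longleftrightarrow> S \<subseteq> F"
    by (simp add: admissible_centers_def convex_position_def S_def F_def)
  also have "\<dots> \<longleftrightarrow> {a, 2 *\<^sub>R O' - a} \<subseteq> F \<and> {b, 2 *\<^sub>R O' - b} \<subseteq> F \<and> {c, 2 *\<^sub>R O' - c} \<subseteq> F"
    by (auto simp: S_def reflect_set_def)
  also have "\<dots> \<longleftrightarrow> \<not> (1/2 < \<alpha> \<and> \<beta> < 1/2 \<and> \<gamma> < 1/2) \<and> \<not> (1/2 < \<beta> \<and> \<gamma> < 1/2 \<and> \<alpha> < 1/2)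
      \<and> \<not> (1/2 < \<gamma> \<and> \<alpha> < 1/2 \<and> \<beta> < 1/2)"
    using vertex_and_reflection_in_frontier_iff[OF not_collinear decomp(1) sum(1), folded S_def F_def]
      vertex_and_reflection_in_frontier_iff[OF rotated(1) decomp(2) sum(2), folded rotated(3) F_def]
      vertex_and_reflection_in_frontier_iff[OF rotated(2) decomp(3) sum(3), folded rotated(4) F_def]
    by simp
  also have "\<dots> \<longleftrightarrow> O' \<in> - \<Union> (midline_cell a b c ` corner_patterns)"
    by (auto simp: corner_patterns_def half_line_def \<alpha>_def \<beta>_def \<gamma>_def)
  finally show "O' \<in> admissible_centers {a, b, c} \<longleftrightarrow> O' \<in> - \<Union> (midline_cell a b c ` corner_patterns)" .
qed

theorem mainTheorem4:
  fixes a b c :: "real^2"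
  assumes "\<not> collinear {a, b, c}"
  shows "card (components (- midlines a b c)) = 7
    \<and> admissible_centers {a, b, c} =
        \<Union> {closure C | C. C \<in> components (- midlines a b c)
                         \<and> a \<notin> closure C \<and> b \<notin> closure C \<and> c \<notin> closure C}"
proof -
  have "{closure C | C. C \<in> components (- midlines a b c)
                  \<and> a \<notin> closure C \<and> b \<notin> closure C \<and> c \<notin> closure C}
      = closed_midline_cell a b c ` (cell_patterns - corner_patterns)"
    using closures_of_components_complement_midlines[OF assms, of "\<lambda>C. a \<notin> C \<and> b \<notin> C \<and> c \<notin> C"]
    by (simp add: closed_midline_cell_avoids_vertices_iff[OF assms] set_diff_eq)
  then show ?thesis
    using card_components_complement_midlines[OF assms] admissible_centers_eq[OF assms]
      Union_closed_midline_cells_off_corners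
    by simp
qed

end
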